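(* In the multi-hop VAoI network described in the context, the VAoI at the destination node $N+1$ satisfies \[ \Delta_{N+1}(t)=\Delta_1(t-\tau_N)+\beta_N, \] where $\tau_N=\sum_{i=1}^N m_i$ and $\beta_N=\sum_{i=1}^N\eta_{m_i}$, with $m_i$ independent geometric random variables with parameters $\rho_i$ ($\mathbb{P}(m_i=\ell)=(1-\rho_i)^{\ell-1}\rho_i$, $\ell\ge1$) and $\eta_{m_i}$ conditionally on $m_i$ binomial with parameters $m_i$ and $p_g$ (the number of source versions generated during those $m_i$ slots). Moreover $\mathbb{E}[\tau_N]=\sum_{i=1}^N\frac1{\rho_i}$ and $\mathbb{E}[\beta_N]=p_g\sum_{i=1}^N\frac1{\rho_i}$.
   Context: Time is slotted. A source generates a new version in each slot independently with probability $p_g$, and its version index $V_S(t)$ increases by one at the start of the slot following each generation. Nodes $0,1,\dots,N+1$ form a line; node $0$ always holds the current source version ($V_0(t)=V_S(t)$), node $N+1$ is the destination, and nodes $1,\dots,N$ are relays. Each node stores only the latest version it has received. Link $i$ (from node $i$ to node $i+1$) delivers a transmission successfully with probability $\rho_i$, independently across slots and links ($\rho_0=p_s$). Node $0$ transmits according to an update policy; each relay node $i\ge1$ transmits its stored version in every slot, so that $V_{i+1}(t+1)=V_i(t)$ if the transmission on link $i$ at slot $t$ succeeds and $V_{i+1}(t+1)=V_{i+1}(t)$ otherwise. The VAoI at node $j$ is $\Delta_j(t)=V_S(t)-V_j(t)$. The random variable $m_i$ is the number of slots back to the last successful delivery on link $i$ (the relaying delay over link $i$). *)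

theory Defs
  imports "HOL-Probability.Probability"
begin

text \<open>Slotted time is the set of integers (stationary regime). S i s w: transmission on
link i (node i to node i+1) in slot s succeeds. G s w: the source generates a new version in slot s.\<close>

definition link_delay :: "(nat \<Rightarrow> int \<Rightarrow> 'a \<Rightarrow> bool) \<Rightarrow> nat \<Rightarrow> int \<Rightarrow> 'a \<Rightarrow> nat" where
  "link_delay S i s w = (LEAST l::nat. 1 \<le> l \<and> S i (s - int l) w)"

text \<open>back_time S N t k w: the time at node N+1-k from which the version held by the
destination at time t originates (tracing back k hops).\<close>
fun back_time :: "(nat \<Rightarrow> int \<Rightarrow> 'a \<Rightarrow> bool) \<Rightarrow> nat \<Rightarrow> int \<Rightarrow> nat \<Rightarrow> 'a \<Rightarrow> int" where
  "back_time S N t 0 w = t"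
| "back_time S N t (Suc k) w = back_time S N t k w - int (link_delay S (N - k) (back_time S N t k w) w)"

text \<open>m_i: relaying delay over link i along the path of the version held at node N+1 at time t.\<close>
definition hop_delay :: "(nat \<Rightarrow> int \<Rightarrow> 'a \<Rightarrow> bool) \<Rightarrow> nat \<Rightarrow> int \<Rightarrow> nat \<Rightarrow> 'a \<Rightarrow> nat" where
  "hop_delay S N t i w = link_delay S i (back_time S N t (N - i) w) w"

definition hop_gen :: "(int \<Rightarrow> 'a \<Rightarrow> bool) \<Rightarrow> (nat \<Rightarrow> int \<Rightarrow> 'a \<Rightarrow> bool) \<Rightarrow> nat \<Rightarrow> int \<Rightarrow> nat \<Rightarrow> 'a \<Rightarrow> nat" where
  "hop_gen G S N t i w = card {l \<in> {1..hop_delay S N t i w}. G (back_time S N t (N - i) w - int l) w}"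

definition tauN :: "(nat \<Rightarrow> int \<Rightarrow> 'a \<Rightarrow> bool) \<Rightarrow> nat \<Rightarrow> int \<Rightarrow> 'a \<Rightarrow> nat" where
  "tauN S N t w = (\<Sum>i=1..N. hop_delay S N t i w)"

definition betaN :: "(int \<Rightarrow> 'a \<Rightarrow> bool) \<Rightarrow> (nat \<Rightarrow> int \<Rightarrow> 'a \<Rightarrow> bool) \<Rightarrow> nat \<Rightarrow> int \<Rightarrow> 'a \<Rightarrow> nat" where
  "betaN G S N t w = (\<Sum>i=1..N. hop_gen G S N t i w)"

text \<open>VAoI at node j: Delta_j(t) = V_S(t) - V_j(t), with V 0 = V_S.\<close>
definition vaoi :: "(nat \<Rightarrow> int \<Rightarrow> 'a \<Rightarrow> int) \<Rightarrow> nat \<Rightarrow> int \<Rightarrow> 'a \<Rightarrow> int" where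
  "vaoi V j s w = V 0 s w - V j s w"

end

theory Submission
  imports Defs
begin

(* Tracing the version held by the destination back along the line, each hop goes back by the
   delay m_i since the last success on link i, while the source meanwhile produces the versions
   generated during those slots; this gives the identity for the VAoI pathwise as soon as every
   link has succeeded at some earlier slot, which holds almost surely.
   The delays are independent geometric variables by a strong Markov argument: the slot at which
   the trace reaches node i+1 is determined by the coins of the links downstream of link i, hence
   is independent of the coins of link i and of the source, and the law of the delay back from a
   fixed slot does not depend on that slot. Conditioning on this countably valued slot gives the
   joint law of the delays and the binomial law of the generation counts; the means then follow
   from those of the geometric and binomial laws. *)

section \<open>Tracing a version back along the line\<close>

lemma link_delay_cong:
  assumes "\<And>s. S i s w = S' i s w'"
  shows "link_delay S i c w = link_delay S' i c w'"
  unfolding link_delay_def using assms by simp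

lemma back_time_cong:
  assumes "\<And>j s. j < k \<Longrightarrow> S (N - j) s w = S' (N - j) s w'"
  shows "back_time S N t k w = back_time S' N t k w'"
  using assms by (induction k) (auto intro!: link_delay_cong)

lemma back_time_Suc_shift:
  "back_time S (Suc n) t (Suc k) w = back_time S n (t - int (link_delay S (Suc n) t w)) k w"
  by (induction k) simp_all

lemma hop_delay_Suc_shift:
  assumes "i \<in> {1..n}"
  shows "hop_delay S (Suc n) t i w = hop_delay S n (t - int (link_delay S (Suc n) t w)) i w"
proof -
  have "Suc n - i = Suc (n - i)" using assms by auto
  then show ?thesis unfolding hop_delay_def by (simp only: back_time_Suc_shift)
qed

lemma hop_delay_last: "hop_delay S (Suc n) t (Suc n) w = link_delay S (Suc n) t w"
  unfolding hop_delay_def by simp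

lemma hop_gen_le_hop_delay: "hop_gen G S N t i w \<le> hop_delay S N t i w"
proof -
  have "hop_gen G S N t i w \<le> card {1..hop_delay S N t i w}"
    unfolding hop_gen_def by (intro card_mono) auto
  then show ?thesis by simp
qed

lemma measurable_link_delay:
  assumes "\<And>s. Measurable.pred \<Omega> (S i s)"
  shows "link_delay S i c \<in> measurable \<Omega> (count_space UNIV)"
  unfolding link_delay_def by (rule measurable_Least) (use assms in measurable)

lemma measurable_back_time:
  assumes "\<And>j s. j < k \<Longrightarrow> Measurable.pred \<Omega> (S (N - j) s)"
  shows "back_time S N t k \<in> measurable \<Omega> (count_space UNIV)"
  using assms
proof (induction k)
  case 0
  have "back_time S N t 0 = (\<lambda>_. t)" by (rule ext) simp
  then show ?case by simp
next
  case (Suc k)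
  have [measurable]: "back_time S N t k \<in> measurable \<Omega> (count_space UNIV)"
    using Suc by auto
  have [measurable]: "link_delay S (N - k) c \<in> measurable \<Omega> (count_space UNIV)" for c
    by (rule measurable_link_delay) (use Suc.prems in auto)
  have "(\<lambda>w. (\<lambda>c w. c - int (link_delay S (N - k) c w)) (back_time S N t k w) w)
          \<in> measurable \<Omega> (count_space UNIV)"
    by (rule measurable_compose_countable) measurable
  then show ?case by simp
qed

lemma measurable_hop_delay:
  assumes "\<And>s. Measurable.pred \<Omega> (S i s)"
    and "\<And>j s. j < n - i \<Longrightarrow> Measurable.pred \<Omega> (S (n - j) s)"
  shows "hop_delay S n t i \<in> measurable \<Omega> (count_space UNIV)"
proof -
  have "(\<lambda>w. (\<lambda>c. link_delay S i c) (back_time S n t (n - i) w) w) \<in> measurable \<Omega> (count_space UNIV)"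
    by (rule measurable_compose_countable[OF measurable_link_delay measurable_back_time])
       (use assms in auto)
  then show ?thesis unfolding hop_delay_def by simp
qed

lemma link_delay_spec:
  assumes "\<exists>l\<ge>1. S i (c - int l) w"
  shows "1 \<le> link_delay S i c w" "S i (c - int (link_delay S i c w)) w"
    and "\<And>j. 1 \<le> j \<Longrightarrow> j < link_delay S i c w \<Longrightarrow> \<not> S i (c - int j) w"
proof -
  have "1 \<le> link_delay S i c w \<and> S i (c - int (link_delay S i c w)) w"
    unfolding link_delay_def by (rule LeastI_ex) (use assms in auto)
  then show "1 \<le> link_delay S i c w" "S i (c - int (link_delay S i c w)) w" by auto
  show "\<not> S i (c - int j) w" if "1 \<le> j" "j < link_delay S i c w" for j
    using that not_less_Least unfolding link_delay_def by blast
qed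

lemma link_delay_eq_iff:
  assumes "\<exists>j\<ge>1. S i (c - int j) w"
  shows "link_delay S i c w = l \<longleftrightarrow> l \<noteq> 0 \<and> (\<forall>j\<in>{1..l}. S i (c - int j) w = (j = l))"
proof
  show "l \<noteq> 0 \<and> (\<forall>j\<in>{1..l}. S i (c - int j) w = (j = l))" if "link_delay S i c w = l"
    using that link_delay_spec[of S i c w, OF assms]
    by (metis atLeastAtMost_iff le_neq_implies_less not_one_le_zero)
next
  assume l: "l \<noteq> 0 \<and> (\<forall>j\<in>{1..l}. S i (c - int j) w = (j = l))"
  then have "link_delay S i c w \<le> l"
    unfolding link_delay_def by (intro Least_le) auto
  moreover have "\<not> link_delay S i c w < l"
    using l link_delay_spec(1,2)[of S i c w, OF assms] by auto
  ultimately show "link_delay S i c w = l" by simp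
qed

lemma relay_version_link_delay:
  assumes relay: "\<And>s. V (Suc i) (s + 1) w = (if S i s w then V i s w else V (Suc i) s w)"
    and "\<exists>l\<ge>1. S i (c - int l) w"
  shows "V (Suc i) c w = V i (c - int (link_delay S i c w)) w"
proof -
  let ?L = "link_delay S i c w"
  note spec = link_delay_spec[of S i c w, OF assms(2)]
  have held: "V (Suc i) c w = V (Suc i) (c - int d) w" if "d < ?L" for d
    using that
  proof (induction d)
    case (Suc d)
    have "\<not> S i (c - int (Suc d)) w" using spec(3)[of "Suc d"] Suc.prems by auto
    then have "V (Suc i) (c - int d) w = V (Suc i) (c - int (Suc d)) w"
      using relay[of "c - int (Suc d)"] by simp
    then show ?case using Suc by simp
  qed simp
  have "V (Suc i) c w = V (Suc i) (c - int (?L - 1)) w"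
    using held[of "?L - 1"] spec(1) by simp
  also have "c - int (?L - 1) = c - int ?L + 1" using spec(1) by simp
  also have "V (Suc i) \<dots> w = V i (c - int ?L) w"
    using relay[of "c - int ?L"] spec(2) by simp
  finally show ?thesis .
qed

lemma card_filter_atLeastAtMost_Suc:
  "card {j \<in> {1..Suc l}. P j} = card {j \<in> {1..l}. P j} + (if P (Suc l) then 1 else 0)"
proof -
  have "{j \<in> {1..Suc l}. P j} = (if P (Suc l) then insert (Suc l) {j \<in> {1..l}. P j} else {j \<in> {1..l}. P j})"
    by (auto simp: atLeastAtMostSuc_conv)
  then show ?thesis by simp
qed

lemma source_version_diff:
  fixes f :: "int \<Rightarrow> int"
  assumes "\<And>s. f (s + 1) = f s + (if g s then 1 else 0)"
  shows "f c - f (c - int l) = int (card {j \<in> {1..l}. g (c - int j)})"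
proof (induction l)
  case (Suc l)
  have "f (c - int l) = f (c - int (Suc l)) + (if g (c - int (Suc l)) then 1 else 0)"
    using assms[of "c - int (Suc l)"] by simp
  then show ?case
    using Suc.IH card_filter_atLeastAtMost_Suc[where P="\<lambda>j. g (c - int j)" and l=l]
    by (simp split: if_splits)
qed simp

text \<open>Invariant of the induction over hops: after k hops the version held by the destination at
  time t is the one held by node N+1-k at back_time k, and meanwhile the source has produced the
  versions generated during the k traversed delays.\<close>
lemma vaoi_destination_eq:
  assumes good: "\<And>i c. i \<in> {1..N} \<Longrightarrow> \<exists>l\<ge>1. S i (c - int l) w"
    and source: "\<And>s. V 0 (s + 1) w = V 0 s w + (if G s w then 1 else 0)"
    and relay: "\<And>i s. i \<in> {1..N} \<Longrightarrow> V (Suc i) (s + 1) w = (if S i s w then V i s w else V (Suc i) s w)"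
  shows "vaoi V (N + 1) t w = vaoi V 1 (t - int (tauN S N t w)) w + int (betaN G S N t w)"
proof -
  let ?b = "\<lambda>k. back_time S N t k w"
  let ?d = "\<lambda>j. link_delay S (N - j) (?b j) w"
  let ?g = "\<lambda>j. card {l \<in> {1..?d j}. G (?b j - int l) w}"
  have back_time_sum: "?b k = t - int (\<Sum>j<k. ?d j)" for k
    by (induction k) auto
  have trace: "V (N + 1 - k) (?b k) w = V (N + 1) t w \<and> V 0 t w - V 0 (?b k) w = int (\<Sum>j<k. ?g j)"
    if "k \<le> N" for k
    using that
  proof (induction k)
    case (Suc k)
    have i: "N - k \<in> {1..N}" and node: "N + 1 - k = Suc (N - k)" using Suc.prems by auto
    have "V (Suc (N - k)) (?b k) w = V (N - k) (?b k - int (?d k)) w"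
      by (rule relay_version_link_delay) (use relay[OF i] good[OF i] in auto)
    moreover have "V 0 (?b k) w - V 0 (?b k - int (?d k)) w = int (?g k)"
      by (rule source_version_diff) (use source in auto)
    ultimately show ?case using Suc node by simp
  qed simp
  have reindex: "(\<Sum>i=1..N. f i) = (\<Sum>j<N. f (N - j))" for f :: "nat \<Rightarrow> nat"
    by (rule sum.reindex_bij_witness[of _ "\<lambda>i. N - i" "\<lambda>j. N - j"]) auto
  have tau: "tauN S N t w = (\<Sum>j<N. ?d j)"
    unfolding tauN_def hop_delay_def by (subst reindex) (auto intro!: sum.cong)
  have beta: "betaN G S N t w = (\<Sum>j<N. ?g j)"
    unfolding betaN_def hop_gen_def hop_delay_def by (subst reindex) (auto intro!: sum.cong)
  show ?thesis using trace[of N] back_time_sum[of N] tau beta unfolding vaoi_def by simp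
qed

section \<open>Independence and random indices\<close>

context prob_space
begin

lemma prob_pred_eq_bool:
  assumes [measurable]: "Measurable.pred M P"
  shows "prob {w \<in> space M. P w = b} = (if b then prob {w \<in> space M. P w} else 1 - prob {w \<in> space M. P w})"
proof (cases b)
  case False
  then have "{w \<in> space M. P w = b} = space M - {w \<in> space M. P w}" by auto
  then show ?thesis using prob_compl[of "{w \<in> space M. P w}"] False by simp
qed simp

lemma indep_vars_prob_all_eq_prod:
  assumes indep: "indep_vars (\<lambda>_. count_space UNIV) X J"
    and K: "finite K" "inj_on h K" "h ` K \<subseteq> J"
  shows "prob {w \<in> space M. \<forall>j\<in>K. X (h j) w = b j} = (\<Prod>j\<in>K. prob {w \<in> space M. X (h j) w = b j})"
proof (cases "K = {}")
  case True
  then show ?thesis by (simp add: prob_space)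
next
  case False
  let ?A = "\<lambda>x. {b (inv_into K h x)}"
  have "prob (\<Inter>x\<in>h ` K. X x -` ?A x \<inter> space M) = (\<Prod>x\<in>h ` K. prob (X x -` ?A x \<inter> space M))"
    by (rule indep_varsD[OF indep]) (use K False in auto)
  also have "\<dots> = (\<Prod>j\<in>K. prob (X (h j) -` ?A (h j) \<inter> space M))"
    using K(2) by (simp add: prod.reindex)
  also have "\<dots> = (\<Prod>j\<in>K. prob {w \<in> space M. X (h j) w = b j})"
    using K(2) by (intro prod.cong refl arg_cong[where f=prob]) auto
  also have "(\<Inter>x\<in>h ` K. X x -` ?A x \<inter> space M) = {w \<in> space M. \<forall>j\<in>K. X (h j) w = b j}"
    using False K(2) by auto
  finally show ?thesis .
qed

lemma indep_vars_restrict_pred: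
  assumes "indep_vars (\<lambda>_. count_space UNIV) X J" "A \<inter> B = {}" "A \<subseteq> J" "B \<subseteq> J"
    and [measurable]: "Measurable.pred (PiM A (\<lambda>_. count_space UNIV)) f"
    and [measurable]: "Measurable.pred (PiM B (\<lambda>_. count_space UNIV)) g"
  shows "prob {w \<in> space M. f (restrict (\<lambda>j. X j w) A) \<and> g (restrict (\<lambda>j. X j w) B)}
       = prob {w \<in> space M. f (restrict (\<lambda>j. X j w) A)} * prob {w \<in> space M. g (restrict (\<lambda>j. X j w) B)}"
proof -
  let ?XA = "\<lambda>w. restrict (\<lambda>j. X j w) A" and ?XB = "\<lambda>w. restrict (\<lambda>j. X j w) B"
  let ?F = "{x \<in> space (PiM A (\<lambda>_. count_space UNIV)). f x}"
  let ?G = "{x \<in> space (PiM B (\<lambda>_. count_space UNIV)). g x}"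
  have "prob ((\<lambda>w. (?XA w, ?XB w)) -` (?F \<times> ?G) \<inter> space M)
      = prob (?XA -` ?F \<inter> space M) * prob (?XB -` ?G \<inter> space M)"
    by (rule indep_varD[OF indep_var_restrict[OF assms(1-4)]]) measurable
  moreover have "?XA w \<in> space (PiM A (\<lambda>_. count_space UNIV))"
    and "?XB w \<in> space (PiM B (\<lambda>_. count_space UNIV))" for w
    by (simp_all add: space_PiM)
  ultimately show ?thesis
    by (simp add: vimage_def Int_def conj_commute conj_left_commute)
qed

end

lemma emeasure_random_index:
  fixes b :: "'a \<Rightarrow> 'c::countable"
  assumes [measurable]: "b \<in> measurable M (count_space UNIV)" "\<And>c. Measurable.pred M (E c)"
  shows "emeasure M {w \<in> space M. E (b w) w}
       = (\<integral>\<^sup>+c. emeasure M {w \<in> space M. b w = c \<and> E c w} \<partial>count_space UNIV)"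
proof -
  have "{w \<in> space M. E (b w) w} = (\<Union>c. {w \<in> space M. b w = c \<and> E c w})" by auto
  also have "emeasure M \<dots> = (\<integral>\<^sup>+c. emeasure M {w \<in> space M. b w = c \<and> E c w} \<partial>count_space UNIV)"
    by (rule emeasure_UN_countable) (auto simp: disjoint_family_on_def)
  finally show ?thesis .
qed

lemma (in prob_space) prob_random_index_factor:
  fixes b :: "'a \<Rightarrow> 'c::countable"
  assumes [measurable]: "b \<in> measurable M (count_space UNIV)"
    and [measurable]: "\<And>c. Measurable.pred M (E c)" "\<And>c. Measurable.pred M (F c)"
    and "0 \<le> K" "\<And>c. prob {w \<in> space M. b w = c \<and> E c w} = prob {w \<in> space M. b w = c \<and> F c w} * K"
  shows "prob {w \<in> space M. E (b w) w} = prob {w \<in> space M. F (b w) w} * K"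
proof -
  have "emeasure M {w \<in> space M. E (b w) w}
      = (\<integral>\<^sup>+c. emeasure M {w \<in> space M. b w = c \<and> E c w} \<partial>count_space UNIV)"
    by (rule emeasure_random_index) measurable
  also have "\<dots> = (\<integral>\<^sup>+c. emeasure M {w \<in> space M. b w = c \<and> F c w} * ennreal K \<partial>count_space UNIV)"
    using assms(4,5) by (intro nn_integral_cong) (simp add: emeasure_eq_measure ennreal_mult)
  also have "\<dots> = emeasure M {w \<in> space M. F (b w) w} * ennreal K"
    by (simp add: nn_integral_multc emeasure_random_index)
  finally show ?thesis
    using assms(4) by (simp add: emeasure_eq_measure ennreal_mult[symmetric])
qed

lemma nn_integral_nat_split:
  fixes Y :: "'a \<Rightarrow> nat"
  assumes [measurable]: "Y \<in> measurable M (count_space UNIV)" "h \<in> borel_measurable M"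
  shows "(\<integral>\<^sup>+w. h w \<partial>M) = (\<Sum>l. \<integral>\<^sup>+w. h w * indicator {w \<in> space M. Y w = l} w \<partial>M)"
proof -
  have "(\<integral>\<^sup>+w. h w \<partial>M) = (\<integral>\<^sup>+w. (\<Sum>l. h w * indicator {w \<in> space M. Y w = l} w) \<partial>M)"
  proof (rule nn_integral_cong)
    fix w assume "w \<in> space M"
    then have "(\<lambda>l. h w * indicator {w \<in> space M. Y w = l} w) = (\<lambda>l. if l = Y w then h w else 0)"
      by (auto simp: indicator_def)
    then show "h w = (\<Sum>l. h w * indicator {w \<in> space M. Y w = l} w)"
      using sums_single[of "Y w" "\<lambda>_. h w"] by (simp add: sums_iff)
  qed
  also have "\<dots> = (\<Sum>l. \<integral>\<^sup>+w. h w * indicator {w \<in> space M. Y w = l} w \<partial>M)"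
    by (rule nn_integral_suminf) measurable
  finally show ?thesis .
qed

lemma nn_integral_nat_valued:
  fixes Y :: "'a \<Rightarrow> nat"
  assumes [measurable]: "Y \<in> measurable M (count_space UNIV)"
  shows "(\<integral>\<^sup>+w. f (Y w) \<partial>M) = (\<Sum>l. f l * emeasure M {w \<in> space M. Y w = l})"
proof -
  have "(\<lambda>w. f (Y w)) \<in> borel_measurable M"
    using measurable_compose[of Y M "count_space UNIV" f borel] by simp
  then have "(\<integral>\<^sup>+w. f (Y w) \<partial>M) = (\<Sum>l. \<integral>\<^sup>+w. f (Y w) * indicator {w \<in> space M. Y w = l} w \<partial>M)"
    by (rule nn_integral_nat_split[OF assms])
  also have "\<dots> = (\<Sum>l. \<integral>\<^sup>+w. f l * indicator {w \<in> space M. Y w = l} w \<partial>M)"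
    by (intro suminf_cong nn_integral_cong) (auto simp: indicator_def)
  also have "\<dots> = (\<Sum>l. f l * emeasure M {w \<in> space M. Y w = l})"
    by (intro suminf_cong nn_integral_cmult_indicator) measurable
  finally show ?thesis .
qed

lemma nn_integral_nat_indicator:
  fixes Y Z :: "'a \<Rightarrow> nat"
  assumes [measurable]: "Y \<in> measurable M (count_space UNIV)" "Z \<in> measurable M (count_space UNIV)"
    and bounded: "\<And>w. w \<in> space M \<Longrightarrow> Y w = l \<Longrightarrow> Z w \<le> l"
  shows "(\<integral>\<^sup>+w. ennreal (real (Z w)) * indicator {w \<in> space M. Y w = l} w \<partial>M)
       = (\<Sum>k\<le>l. ennreal (real k) * emeasure M {w \<in> space M. Y w = l \<and> Z w = k})"
proof -
  have "(\<integral>\<^sup>+w. ennreal (real (Z w)) * indicator {w \<in> space M. Y w = l} w \<partial>M)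
      = (\<integral>\<^sup>+w. (\<Sum>k\<le>l. ennreal (real k) * indicator {w \<in> space M. Y w = l \<and> Z w = k} w) \<partial>M)"
  proof (rule nn_integral_cong)
    fix w assume w: "w \<in> space M"
    have "(\<Sum>k\<le>l. ennreal (real k) * indicator {w \<in> space M. Y w = l \<and> Z w = k} w)
        = (\<Sum>k\<le>l. if k = Z w \<and> Y w = l then ennreal (real k) else 0)"
      using w by (intro sum.cong) (auto simp: indicator_def)
    then show "ennreal (real (Z w)) * indicator {w \<in> space M. Y w = l} w
        = (\<Sum>k\<le>l. ennreal (real k) * indicator {w \<in> space M. Y w = l \<and> Z w = k} w)"
      using w bounded[OF w] by (auto simp: indicator_def sum.delta')
  qed
  also have "\<dots> = (\<Sum>k\<le>l. \<integral>\<^sup>+w. ennreal (real k) * indicator {w \<in> space M. Y w = l \<and> Z w = k} w \<partial>M)"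
    by (rule nn_integral_sum) measurable
  also have "\<dots> = (\<Sum>k\<le>l. ennreal (real k) * emeasure M {w \<in> space M. Y w = l \<and> Z w = k})"
    by (intro sum.cong refl nn_integral_cmult_indicator) measurable
  finally show ?thesis .
qed

lemma geometric_mean_sums:
  fixes r :: real
  assumes "0 < r" "r \<le> 1"
  shows "(\<lambda>l. real l * (if l = 0 then 0 else (1 - r) ^ (l - 1) * r)) sums (1 / r)"
proof -
  have "(\<lambda>n. real (Suc n) * (1 - r) ^ n) sums (1 / (1 - (1 - r)) ^ 2)"
    using geometric_deriv_sums[of "1 - r"] assms by simp
  then have "(\<lambda>n. real (Suc n) * (1 - r) ^ n * r) sums (1 / r)"
    using sums_mult2[of _ _ r] assms by (fastforce simp: power2_eq_square)
  then have "(\<lambda>n. real (Suc n) * (if Suc n = 0 then 0 else (1 - r) ^ (Suc n - 1) * r)) sums (1 / r)"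
    by (simp add: mult.assoc)
  then show ?thesis by (subst (asm) sums_Suc_iff) simp
qed

lemma binomial_mean:
  fixes p :: real
  shows "(\<Sum>k\<le>l. real k * (real (l choose k) * p ^ k * (1 - p) ^ (l - k))) = real l * p"
proof (cases l)
  case (Suc m)
  have "(\<Sum>k\<le>Suc m. real k * (real (Suc m choose k) * p ^ k * (1 - p) ^ (Suc m - k)))
      = (\<Sum>k\<le>m. real (Suc k) * real (Suc m choose Suc k) * p * (p ^ k * (1 - p) ^ (m - k)))"
    by (subst sum.atMost_Suc_shift) (simp add: algebra_simps)
  also have "\<dots> = real (Suc m) * p * (\<Sum>k\<le>m. real (m choose k) * p ^ k * (1 - p) ^ (m - k))"
    unfolding sum_distrib_left
  proof (intro sum.cong refl)
    fix k
    have "real (Suc k) * real (Suc m choose Suc k) = real (Suc m) * real (m choose k)"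
      by (metis Suc_times_binomial of_nat_mult)
    then show "real (Suc k) * real (Suc m choose Suc k) * p * (p ^ k * (1 - p) ^ (m - k))
        = real (Suc m) * p * (real (m choose k) * p ^ k * (1 - p) ^ (m - k))"
      by (simp only: mult_ac)
  qed
  also have "(\<Sum>k\<le>m. real (m choose k) * p ^ k * (1 - p) ^ (m - k)) = 1"
    using binomial_ring[of p "1 - p" m] by simp
  finally show ?thesis using Suc by simp
qed simp

section \<open>The random line network\<close>

text \<open>Evaluating a link quantity with these coordinates on the restriction of the coin vector
  case_sum G (case_prod S) to a set of links exhibits it as a function of the coins of those links
  only.\<close>
definition succ_coord :: "nat \<Rightarrow> int \<Rightarrow> (int + nat \<times> int \<Rightarrow> bool) \<Rightarrow> bool" where
  "succ_coord i s x = x (Inr (i, s))"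

definition gen_coord :: "int \<Rightarrow> (int + nat \<times> int \<Rightarrow> bool) \<Rightarrow> bool" where
  "gen_coord s x = x (Inl s)"

lemma measurable_succ_coord:
  "Inr (i, s) \<in> A \<Longrightarrow> Measurable.pred (PiM A (\<lambda>_. count_space UNIV)) (succ_coord i s)"
  unfolding succ_coord_def by simp

lemma measurable_gen_coord:
  "Inl s \<in> A \<Longrightarrow> Measurable.pred (PiM A (\<lambda>_. count_space UNIV)) (gen_coord s)"
  unfolding gen_coord_def by simp

locale relay_network = prob_space M for M :: "'a measure" +
  fixes G :: "int \<Rightarrow> 'a \<Rightarrow> bool" and S :: "nat \<Rightarrow> int \<Rightarrow> 'a \<Rightarrow> bool" and N :: nat
    and pg :: real and \<rho> :: "nat \<Rightarrow> real"
  assumes pg: "0 \<le> pg" "pg \<le> 1"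
    and rho: "\<And>i. i \<in> {1..N} \<Longrightarrow> 0 < \<rho> i \<and> \<rho> i \<le> 1"
    and indep: "indep_vars (\<lambda>_. count_space UNIV) (case_sum G (case_prod S))
                  (range Inl \<union> Inr ` ({1..N} \<times> UNIV))"
    and gen: "\<And>s. prob {w \<in> space M. G s w} = pg"
    and succ: "\<And>i s. i \<in> {1..N} \<Longrightarrow> prob {w \<in> space M. S i s w} = \<rho> i"
begin

abbreviation coin :: "int + nat \<times> int \<Rightarrow> 'a \<Rightarrow> bool" where
  "coin \<equiv> case_sum G (case_prod S)"

abbreviation coins :: "(int + nat \<times> int) set" where
  "coins \<equiv> range Inl \<union> Inr ` ({1..N} \<times> UNIV)"

abbreviation links :: "nat set \<Rightarrow> (int + nat \<times> int) set" where
  "links K \<equiv> Inr ` (K \<times> UNIV)"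

abbreviation coins_on :: "(int + nat \<times> int) set \<Rightarrow> 'a \<Rightarrow> int + nat \<times> int \<Rightarrow> bool" where
  "coins_on A w \<equiv> restrict (\<lambda>j. coin j w) A"

lemma measurable_S: "i \<in> {1..N} \<Longrightarrow> Measurable.pred M (S i s)"
  using indep unfolding indep_vars_def by (auto dest!: bspec[of _ _ "Inr (i, s)"])

lemma measurable_G: "Measurable.pred M (G s)"
  using indep unfolding indep_vars_def by (auto dest!: bspec[of _ _ "Inl s"])

lemma link_delay_rv: "i \<in> {1..N} \<Longrightarrow> link_delay S i c \<in> measurable M (count_space UNIV)"
  by (rule measurable_link_delay) (rule measurable_S)

lemma back_time_rv:
  "(\<And>j. j < k \<Longrightarrow> n - j \<in> {1..N}) \<Longrightarrow> back_time S n t k \<in> measurable M (count_space UNIV)"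
  by (rule measurable_back_time) (rule measurable_S, auto)

lemma hop_delay_rv: "i \<in> {1..n} \<Longrightarrow> n \<le> N \<Longrightarrow> hop_delay S n t i \<in> measurable M (count_space UNIV)"
  by (rule measurable_hop_delay) (rule measurable_S, auto)+

lemma prob_S_eq: "i \<in> {1..N} \<Longrightarrow> prob {w \<in> space M. S i s w = b} = (if b then \<rho> i else 1 - \<rho> i)"
  using prob_pred_eq_bool[OF measurable_S] succ by simp

lemma prob_G_eq: "prob {w \<in> space M. G s w = b} = (if b then pg else 1 - pg)"
  using prob_pred_eq_bool[OF measurable_G] gen by simp

lemma prob_link_pattern:
  assumes "i \<in> {1..N}"
  shows "prob {w \<in> space M. \<forall>j\<in>{1..l}. S i (c - int j) w = b j}
       = (\<Prod>j\<in>{1..l}. if b j then \<rho> i else 1 - \<rho> i)"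
proof -
  have "prob {w \<in> space M. \<forall>j\<in>{1..l}. coin ((\<lambda>j. Inr (i, c - int j)) j) w = b j}
     = (\<Prod>j\<in>{1..l}. prob {w \<in> space M. coin ((\<lambda>j. Inr (i, c - int j)) j) w = b j})"
    by (rule indep_vars_prob_all_eq_prod[OF indep]) (use assms in \<open>auto simp: inj_on_def\<close>)
  then show ?thesis using prob_S_eq[OF assms] by simp
qed

lemma prob_gen_pattern:
  "prob {w \<in> space M. \<forall>j\<in>{1..l}. G (c - int j) w = b j} = (\<Prod>j\<in>{1..l}. if b j then pg else 1 - pg)"
proof -
  have "prob {w \<in> space M. \<forall>j\<in>{1..l}. coin ((\<lambda>j. Inl (c - int j)) j) w = b j}
     = (\<Prod>j\<in>{1..l}. prob {w \<in> space M. coin ((\<lambda>j. Inl (c - int j)) j) w = b j})"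
    by (rule indep_vars_prob_all_eq_prod[OF indep]) (auto simp: inj_on_def)
  then show ?thesis using prob_G_eq by simp
qed

lemma AE_link_success:
  assumes i: "i \<in> {1..N}"
  shows "AE w in M. \<exists>j\<ge>1. S i (c - int j) w"
proof -
  note [measurable] = measurable_S[OF i]
  let ?Z = "{w \<in> space M. \<forall>j\<ge>1. \<not> S i (c - int j) w}"
  have "prob ?Z \<le> (1 - \<rho> i) ^ n" for n
  proof -
    have "prob ?Z \<le> prob {w \<in> space M. \<forall>j\<in>{1..n}. S i (c - int j) w = False}"
      by (rule finite_measure_mono) auto
    then show ?thesis using prob_link_pattern[OF i, of n c "\<lambda>_. False"] by simp
  qed
  moreover have "1 - \<rho> i < 1" using rho[OF i] by simp
  ultimately have "prob ?Z = 0"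
    using real_arch_pow_inv measure_nonneg[of M ?Z] by (meson le_less_trans less_eq_real_def not_le)
  then have "?Z \<in> null_sets M" by (simp add: emeasure_eq_measure null_sets_def)
  then show ?thesis by (rule AE_I') auto
qed

lemma prob_link_delay:
  assumes i: "i \<in> {1..N}"
  shows "prob {w \<in> space M. link_delay S i c w = l} = (if l = 0 then 0 else (1 - \<rho> i) ^ (l - 1) * \<rho> i)"
proof -
  note [measurable] = measurable_S[OF i] link_delay_rv[OF i]
  let ?B = "{w \<in> space M. l \<noteq> 0 \<and> (\<forall>j\<in>{1..l}. S i (c - int j) w = (j = l))}"
  have "prob {w \<in> space M. link_delay S i c w = l} = prob ?B"
  proof (rule finite_measure_eq_AE)
    show "AE w in M. (w \<in> {w \<in> space M. link_delay S i c w = l}) = (w \<in> ?B)"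
      using AE_link_success[OF i, of c] AE_space
    proof eventually_elim
      case (elim w)
      then show ?case using link_delay_eq_iff[of S i c w l] by simp
    qed
  qed measurable
  also have "\<dots> = (if l = 0 then 0 else (1 - \<rho> i) ^ (l - 1) * \<rho> i)"
  proof (cases l)
    case (Suc m)
    have "(\<Prod>j\<in>{1..Suc m}. if j = Suc m then \<rho> i else 1 - \<rho> i) = (1 - \<rho> i) ^ m * \<rho> i"
      by (simp add: atLeastAtMostSuc_conv)
    then show ?thesis using prob_link_pattern[OF i, of l c "\<lambda>j. j = l"] Suc by simp
  qed simp
  finally show ?thesis .
qed

lemma prob_link_delay_shift:
  assumes i: "i \<in> {1..N}"
  shows "prob {w \<in> space M. link_delay S i c w \<in> A} = prob {w \<in> space M. link_delay S i c' w \<in> A}"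
proof -
  have "emeasure M {w \<in> space M. link_delay S i d w \<in> A}
      = (\<integral>\<^sup>+l. emeasure M {w \<in> space M. link_delay S i d w = l \<and> l \<in> A} \<partial>count_space UNIV)" for d
    by (rule emeasure_random_index[OF link_delay_rv[OF i]]) simp
  moreover have "emeasure M {w \<in> space M. link_delay S i c w = l \<and> l \<in> A}
      = emeasure M {w \<in> space M. link_delay S i c' w = l \<and> l \<in> A}" for l
    using prob_link_delay[OF i, of c l] prob_link_delay[OF i, of c' l]
    by (cases "l \<in> A") (simp_all add: emeasure_eq_measure)
  ultimately show ?thesis by (simp add: measure_def)
qed

lemma prob_gen_count:
  "prob {w \<in> space M. card {j \<in> {1..l}. G (c - int j) w} = k} = real (l choose k) * pg ^ k * (1 - pg) ^ (l - k)"
proof -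
  note [measurable] = measurable_G
  let ?BB = "{B. B \<subseteq> {1..l} \<and> card B = k}"
  let ?E = "\<lambda>B. {w \<in> space M. \<forall>j\<in>{1..l}. G (c - int j) w = (j \<in> B)}"
  have "{w \<in> space M. card {j \<in> {1..l}. G (c - int j) w} = k} = (\<Union>B\<in>?BB. ?E B)"
  proof (intro equalityI subsetI)
    fix w assume "w \<in> {w \<in> space M. card {j \<in> {1..l}. G (c - int j) w} = k}"
    then show "w \<in> (\<Union>B\<in>?BB. ?E B)"
      by (intro UN_I[of "{j \<in> {1..l}. G (c - int j) w}"]) auto
  next
    fix w assume "w \<in> (\<Union>B\<in>?BB. ?E B)"
    then obtain B where "B \<subseteq> {1..l}" "card B = k" "w \<in> ?E B" by auto
    moreover from this have "{j \<in> {1..l}. G (c - int j) w} = B" by auto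
    ultimately show "w \<in> {w \<in> space M. card {j \<in> {1..l}. G (c - int j) w} = k}" by auto
  qed
  moreover have "prob (\<Union>B\<in>?BB. ?E B) = (\<Sum>B\<in>?BB. prob (?E B))"
    by (rule measure_finite_Union) (auto simp: disjoint_family_on_def emeasure_eq_measure)
  moreover have "prob (?E B) = pg ^ k * (1 - pg) ^ (l - k)" if B: "B \<in> ?BB" for B
  proof -
    have "prob (?E B) = (\<Prod>j\<in>{1..l}. if j \<in> B then pg else 1 - pg)"
      by (rule prob_gen_pattern)
    also have "\<dots> = pg ^ card ({1..l} \<inter> B) * (1 - pg) ^ card ({1..l} - B)"
      by (simp add: prod.If_cases Diff_eq)
    also have "card ({1..l} - B) = l - k"
      using B card_Diff_subset[of B "{1..l}"] finite_subset[of B "{1..l}"] by auto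
    finally show ?thesis using B by (simp add: Int_absorb1)
  qed
  ultimately show ?thesis
    by (simp add: n_subsets)
qed

lemma link_delay_restrict:
  "(\<And>s. Inr (i, s) \<in> A) \<Longrightarrow> link_delay succ_coord i c (coins_on A w) = link_delay S i c w"
  by (rule link_delay_cong) (simp add: succ_coord_def)

lemma back_time_restrict:
  "(\<And>j s. j < k \<Longrightarrow> Inr (n - j, s) \<in> A) \<Longrightarrow>
    back_time succ_coord n t k (coins_on A w) = back_time S n t k w"
  by (rule back_time_cong) (simp add: succ_coord_def)

lemma hop_delay_restrict:
  "(\<And>s. Inr (i, s) \<in> A) \<Longrightarrow> (\<And>j s. j < n - i \<Longrightarrow> Inr (n - j, s) \<in> A) \<Longrightarrow>
    hop_delay succ_coord n t i (coins_on A w) = hop_delay S n t i w"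
  unfolding hop_delay_def by (simp add: back_time_restrict link_delay_restrict)

lemma gen_coord_restrict: "Inl s \<in> A \<Longrightarrow> gen_coord s (coins_on A w) = G s w"
  by (simp add: gen_coord_def)

text \<open>The path traced back from node i+1 is determined by the links downstream of link i, so it
  is independent of link i and of the source.\<close>
lemma prob_back_time_indep:
  assumes i: "i \<in> {1..N}" and B: "B \<subseteq> coins" "B \<inter> links {Suc i..N} = {}"
    and [measurable]: "Measurable.pred (PiM B (\<lambda>_. count_space UNIV)) g"
  shows "prob {w \<in> space M. back_time S N t (N - i) w = c \<and> g (coins_on B w)}
       = prob {w \<in> space M. back_time S N t (N - i) w = c} * prob {w \<in> space M. g (coins_on B w)}"
proof -
  let ?A = "links {Suc i..N}"
  have [measurable]: "back_time succ_coord N t (N - i) \<in> measurable (PiM ?A (\<lambda>_. count_space UNIV)) (count_space UNIV)"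
    by (rule measurable_back_time, rule measurable_succ_coord) auto
  have "back_time S N t (N - i) w = back_time succ_coord N t (N - i) (coins_on ?A w)" for w
    by (rule back_time_restrict[symmetric]) auto
  moreover have "prob {w \<in> space M. back_time succ_coord N t (N - i) (coins_on ?A w) = c \<and> g (coins_on B w)}
      = prob {w \<in> space M. back_time succ_coord N t (N - i) (coins_on ?A w) = c}
        * prob {w \<in> space M. g (coins_on B w)}"
    by (rule indep_vars_restrict_pred[OF indep]) (use i B in auto)
  ultimately show ?thesis by simp
qed

lemma prob_hop_delay:
  assumes i: "i \<in> {1..N}"
  shows "prob {w \<in> space M. hop_delay S N t i w \<in> A} = prob {w \<in> space M. link_delay S i 0 w \<in> A}"
proof -
  note [measurable] = back_time_rv[of "N - i" N t] link_delay_rv[OF i]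
  have "prob {w \<in> space M. link_delay S i (back_time S N t (N - i) w) w \<in> A}
      = prob {w \<in> space M. True} * prob {w \<in> space M. link_delay S i 0 w \<in> A}"
  proof (rule prob_random_index_factor[where E="\<lambda>c w. link_delay S i c w \<in> A" and F="\<lambda>_ _. True"])
    fix c
    have [measurable]: "link_delay succ_coord i c \<in> measurable (PiM (links {i}) (\<lambda>_. count_space UNIV)) (count_space UNIV)"
      by (rule measurable_link_delay, rule measurable_succ_coord) auto
    have "prob {w \<in> space M. back_time S N t (N - i) w = c \<and> link_delay succ_coord i c (coins_on (links {i}) w) \<in> A}
        = prob {w \<in> space M. back_time S N t (N - i) w = c}
          * prob {w \<in> space M. link_delay succ_coord i c (coins_on (links {i}) w) \<in> A}"
      by (rule prob_back_time_indep) (use i in auto)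
    then have "prob {w \<in> space M. back_time S N t (N - i) w = c \<and> link_delay S i c w \<in> A}
        = prob {w \<in> space M. back_time S N t (N - i) w = c} * prob {w \<in> space M. link_delay S i c w \<in> A}"
      by (simp add: link_delay_restrict)
    then show "prob {w \<in> space M. back_time S N t (N - i) w = c \<and> link_delay S i c w \<in> A}
        = prob {w \<in> space M. back_time S N t (N - i) w = c \<and> True} * prob {w \<in> space M. link_delay S i 0 w \<in> A}"
      using prob_link_delay_shift[OF i] by simp
  qed (use i in auto)
  then show ?thesis unfolding hop_delay_def by (simp add: prob_space)
qed

lemma prob_link_delay_hop_delays:
  assumes last: "Suc n \<in> {1..N}"
  shows "prob {w \<in> space M. link_delay S (Suc n) c w = l \<and> (\<forall>i\<in>{1..n}. hop_delay S n c' i w \<in> A i)}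
       = prob {w \<in> space M. link_delay S (Suc n) c w = l}
         * prob {w \<in> space M. \<forall>i\<in>{1..n}. hop_delay S n c' i w \<in> A i}"
proof -
  let ?f = "\<lambda>x. link_delay succ_coord (Suc n) c x = l"
  let ?g = "\<lambda>x. \<forall>i\<in>{1..n}. hop_delay succ_coord n c' i x \<in> A i"
  have [measurable]: "link_delay succ_coord (Suc n) c \<in> measurable (PiM (links {Suc n}) (\<lambda>_. count_space UNIV)) (count_space UNIV)"
    by (rule measurable_link_delay, rule measurable_succ_coord) auto
  have [measurable]: "hop_delay succ_coord n c' i \<in> measurable (PiM (links {1..n}) (\<lambda>_. count_space UNIV)) (count_space UNIV)"
    if "i \<in> {1..n}" for i
    by (rule measurable_hop_delay; rule measurable_succ_coord) (use that in auto)
  have "Measurable.pred (PiM (links {1..n}) (\<lambda>_. count_space UNIV)) ?g"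
    by measurable
  then have "prob {w \<in> space M. ?f (coins_on (links {Suc n}) w) \<and> ?g (coins_on (links {1..n}) w)}
      = prob {w \<in> space M. ?f (coins_on (links {Suc n}) w)}
        * prob {w \<in> space M. ?g (coins_on (links {1..n}) w)}"
    by (intro indep_vars_restrict_pred[OF indep]) (use last in auto)
  moreover have "?g (coins_on (links {1..n}) w) \<longleftrightarrow> (\<forall>i\<in>{1..n}. hop_delay S n c' i w \<in> A i)" for w
  proof (rule ball_cong[OF refl])
    fix i assume "i \<in> {1..n}"
    then show "hop_delay succ_coord n c' i (coins_on (links {1..n}) w) \<in> A i
        \<longleftrightarrow> hop_delay S n c' i w \<in> A i"
      by (subst hop_delay_restrict) auto
  qed
  ultimately show ?thesis by (simp add: link_delay_restrict)
qed

lemma prob_hop_delays_prod: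
  "n \<le> N \<Longrightarrow> prob {w \<in> space M. \<forall>i\<in>{1..n}. hop_delay S n t i w \<in> A i}
     = (\<Prod>i\<in>{1..n}. prob {w \<in> space M. link_delay S i 0 w \<in> A i})"
proof (induction n arbitrary: t)
  case 0
  then show ?case by (simp add: prob_space)
next
  case (Suc n)
  have n: "n \<le> N" and last: "Suc n \<in> {1..N}" using Suc.prems by auto
  let ?d = "link_delay S (Suc n) t"
  let ?P = "\<Prod>i\<in>{1..n}. prob {w \<in> space M. link_delay S i 0 w \<in> A i}"
  let ?E = "\<lambda>l w. l \<in> A (Suc n) \<and> (\<forall>i\<in>{1..n}. hop_delay S n (t - int l) i w \<in> A i)"
  note [measurable] = link_delay_rv[OF last]
  have [measurable]: "hop_delay S n c i \<in> measurable M (count_space UNIV)" if "i \<in> {1..n}" for c i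
    using that n by (intro hop_delay_rv) auto
  have "{w \<in> space M. \<forall>i\<in>{1..Suc n}. hop_delay S (Suc n) t i w \<in> A i} = {w \<in> space M. ?E (?d w) w}"
    by (auto simp: atLeastAtMostSuc_conv hop_delay_last hop_delay_Suc_shift)
  also have "prob \<dots> = prob {w \<in> space M. ?d w \<in> A (Suc n)} * ?P"
  proof (rule prob_random_index_factor[where E="?E" and F="\<lambda>l w. l \<in> A (Suc n)"])
    fix l
    show "prob {w \<in> space M. ?d w = l \<and> ?E l w} = prob {w \<in> space M. ?d w = l \<and> l \<in> A (Suc n)} * ?P"
      using prob_link_delay_hop_delays[OF last, of t l "t - int l" A] Suc.IH[OF n]
      by (cases "l \<in> A (Suc n)") simp_all
  qed (auto intro: prod_nonneg)
  also have "prob {w \<in> space M. ?d w \<in> A (Suc n)} = prob {w \<in> space M. link_delay S (Suc n) 0 w \<in> A (Suc n)}"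
    by (rule prob_link_delay_shift[OF last])
  finally show ?case by (simp add: atLeastAtMostSuc_conv mult.commute)
qed

lemma prob_link_delay_gen_count:
  assumes i: "i \<in> {1..N}"
  shows "prob {w \<in> space M. link_delay S i c w = l \<and> card {j \<in> {1..l}. G (c - int j) w} = k}
       = prob {w \<in> space M. link_delay S i c w = l} * prob {w \<in> space M. card {j \<in> {1..l}. G (c - int j) w} = k}"
proof -
  let ?f = "\<lambda>x. link_delay succ_coord i c x = l"
  let ?g = "\<lambda>x. card {j \<in> {1..l}. gen_coord (c - int j) x} = k"
  have [measurable]: "link_delay succ_coord i c \<in> measurable (PiM (links {i}) (\<lambda>_. count_space UNIV)) (count_space UNIV)"
    by (rule measurable_link_delay, rule measurable_succ_coord) auto
  have [measurable]: "Measurable.pred (PiM (range Inl) (\<lambda>_. count_space UNIV)) (gen_coord s)" for s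
    by (rule measurable_gen_coord) auto
  have "Measurable.pred (PiM (range Inl) (\<lambda>_. count_space UNIV)) ?g"
    by measurable
  then have "prob {w \<in> space M. ?f (coins_on (links {i}) w) \<and> ?g (coins_on (range Inl) w)}
      = prob {w \<in> space M. ?f (coins_on (links {i}) w)} * prob {w \<in> space M. ?g (coins_on (range Inl) w)}"
    by (intro indep_vars_restrict_pred[OF indep]) (use i in auto)
  then show ?thesis by (simp add: link_delay_restrict gen_coord_restrict)
qed

lemma prob_hop_delay_hop_gen:
  assumes i: "i \<in> {1..N}"
  shows "prob {w \<in> space M. hop_delay S N t i w = l \<and> hop_gen G S N t i w = k}
       = real (l choose k) * pg ^ k * (1 - pg) ^ (l - k) * prob {w \<in> space M. hop_delay S N t i w = l}"
proof -
  let ?b = "back_time S N t (N - i)"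
  let ?binom = "real (l choose k) * pg ^ k * (1 - pg) ^ (l - k)"
  let ?E = "\<lambda>c w. link_delay S i c w = l \<and> card {j \<in> {1..l}. G (c - int j) w} = k"
  note [measurable] = back_time_rv[of "N - i" N t] link_delay_rv[OF i] measurable_G
  have "prob {w \<in> space M. ?E (?b w) w} = prob {w \<in> space M. True} * (prob {w \<in> space M. link_delay S i 0 w = l} * ?binom)"
  proof (rule prob_random_index_factor[where E="?E" and F="\<lambda>_ _. True"])
    fix c
    let ?B = "links {i} \<union> range Inl"
    let ?g = "\<lambda>x. link_delay succ_coord i c x = l \<and> card {j \<in> {1..l}. gen_coord (c - int j) x} = k"
    have [measurable]: "link_delay succ_coord i c \<in> measurable (PiM ?B (\<lambda>_. count_space UNIV)) (count_space UNIV)"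
      by (rule measurable_link_delay, rule measurable_succ_coord) auto
    have [measurable]: "Measurable.pred (PiM ?B (\<lambda>_. count_space UNIV)) (gen_coord s)" for s
      by (rule measurable_gen_coord) auto
    have "Measurable.pred (PiM ?B (\<lambda>_. count_space UNIV)) ?g"
      by measurable
    then have "prob {w \<in> space M. ?b w = c \<and> ?g (coins_on ?B w)}
        = prob {w \<in> space M. ?b w = c} * prob {w \<in> space M. ?g (coins_on ?B w)}"
      by (intro prob_back_time_indep) (use i in auto)
    then have "prob {w \<in> space M. ?b w = c \<and> ?E c w} = prob {w \<in> space M. ?b w = c} * prob {w \<in> space M. ?E c w}"
      by (simp add: link_delay_restrict gen_coord_restrict)
    then show "prob {w \<in> space M. ?b w = c \<and> ?E c w}
        = prob {w \<in> space M. ?b w = c \<and> True} * (prob {w \<in> space M. link_delay S i 0 w = l} * ?binom)"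
      using prob_link_delay_gen_count[OF i] prob_link_delay_shift[OF i, of c "{l}" 0] prob_gen_count by simp
  qed (use pg in auto)
  moreover have "{w \<in> space M. hop_delay S N t i w = l \<and> hop_gen G S N t i w = k} = {w \<in> space M. ?E (?b w) w}"
    unfolding hop_gen_def hop_delay_def by auto
  moreover have "prob {w \<in> space M. hop_delay S N t i w = l} = prob {w \<in> space M. link_delay S i 0 w = l}"
    using prob_hop_delay[OF i, of t "{l}"] by simp
  ultimately show ?thesis by (simp add: prob_space)
qed

lemma hop_gen_rv:
  assumes i: "i \<in> {1..N}"
  shows "hop_gen G S N t i \<in> measurable M (count_space UNIV)"
proof -
  note [measurable] = measurable_G
  have count: "(\<lambda>w. card {j \<in> {1..m}. G (c - int j) w}) \<in> measurable M (count_space UNIV)" for m c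
    by (rule measurable_card) simp
  have "(\<lambda>w. card {j \<in> {1..link_delay S i c w}. G (c - int j) w}) \<in> measurable M (count_space UNIV)" for c
    by (rule measurable_compose_countable[where f="\<lambda>m w. card {j \<in> {1..m}. G (c - int j) w}",
          OF count link_delay_rv[OF i]])
  then have "(\<lambda>w. card {j \<in> {1..link_delay S i (back_time S N t (N - i) w) w}. G (back_time S N t (N - i) w - int j) w})
      \<in> measurable M (count_space UNIV)"
    by (rule measurable_compose_countable[where f="\<lambda>c w. card {j \<in> {1..link_delay S i c w}. G (c - int j) w}"])
       (rule back_time_rv, use i in auto)
  then show ?thesis unfolding hop_gen_def hop_delay_def .
qed

lemma prob_hop_delay_geometric:
  assumes i: "i \<in> {1..N}"
  shows "prob {w \<in> space M. hop_delay S N t i w = l} = (if l = 0 then 0 else (1 - \<rho> i) ^ (l - 1) * \<rho> i)"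
  using prob_hop_delay[OF i, of t "{l}"] prob_link_delay[OF i, of 0 l] by simp

lemma has_bochner_integral_hop_delay:
  assumes i: "i \<in> {1..N}"
  shows "has_bochner_integral M (\<lambda>w. real (hop_delay S N t i w)) (1 / \<rho> i)"
proof -
  let ?geo = "\<lambda>l. if l = 0 then 0 else (1 - \<rho> i) ^ (l - 1) * \<rho> i"
  have r: "0 < \<rho> i" "\<rho> i \<le> 1" using rho[OF i] by auto
  note [measurable] = hop_delay_rv[OF i order_refl, of t]
  have sums: "(\<lambda>l. real l * ?geo l) sums (1 / \<rho> i)" by (rule geometric_mean_sums[OF r])
  have "(\<integral>\<^sup>+w. ennreal (real (hop_delay S N t i w)) \<partial>M)
      = (\<Sum>l. ennreal (real l) * emeasure M {w \<in> space M. hop_delay S N t i w = l})"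
    by (rule nn_integral_nat_valued) measurable
  also have "\<dots> = (\<Sum>l. ennreal (real l * ?geo l))"
    using r by (intro suminf_cong) (simp add: emeasure_eq_measure prob_hop_delay_geometric[OF i] ennreal_mult)
  also have "\<dots> = ennreal (1 / \<rho> i)"
    using sums r by (subst suminf_ennreal2) (auto simp: sums_iff)
  finally show ?thesis
    using r by (intro has_bochner_integral_nn_integral) auto
qed

lemma nn_integral_hop_gen_indicator:
  assumes i: "i \<in> {1..N}"
  shows "(\<integral>\<^sup>+w. ennreal (real (hop_gen G S N t i w)) * indicator {w \<in> space M. hop_delay S N t i w = l} w \<partial>M)
       = ennreal (pg * (real l * prob {w \<in> space M. hop_delay S N t i w = l}))"
proof -
  let ?p = "prob {w \<in> space M. hop_delay S N t i w = l}"
  let ?binom = "\<lambda>k. real (l choose k) * pg ^ k * (1 - pg) ^ (l - k)"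
  note [measurable] = hop_delay_rv[OF i order_refl, of t] hop_gen_rv[OF i, of t]
  have "(\<integral>\<^sup>+w. ennreal (real (hop_gen G S N t i w)) * indicator {w \<in> space M. hop_delay S N t i w = l} w \<partial>M)
      = (\<Sum>k\<le>l. ennreal (real k) * emeasure M {w \<in> space M. hop_delay S N t i w = l \<and> hop_gen G S N t i w = k})"
    by (rule nn_integral_nat_indicator) (use hop_gen_le_hop_delay in auto)
  also have "\<dots> = (\<Sum>k\<le>l. ennreal (real k * ?binom k * ?p))"
    using pg by (intro sum.cong refl) (simp add: emeasure_eq_measure prob_hop_delay_hop_gen[OF i] ennreal_mult mult.assoc)
  also have "\<dots> = ennreal ((\<Sum>k\<le>l. real k * ?binom k) * ?p)"
    using pg by (subst sum_ennreal) (auto simp: sum_distrib_right)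
  also have "(\<Sum>k\<le>l. real k * ?binom k) * ?p = pg * (real l * ?p)"
    unfolding binomial_mean by simp
  finally show ?thesis .
qed

lemma has_bochner_integral_hop_gen:
  assumes i: "i \<in> {1..N}"
  shows "has_bochner_integral M (\<lambda>w. real (hop_gen G S N t i w)) (pg * (1 / \<rho> i))"
proof -
  let ?geo = "\<lambda>l. if l = 0 then 0 else (1 - \<rho> i) ^ (l - 1) * \<rho> i"
  have r: "0 < \<rho> i" "\<rho> i \<le> 1" using rho[OF i] by auto
  note [measurable] = hop_delay_rv[OF i order_refl, of t] hop_gen_rv[OF i, of t]
  have sums: "(\<lambda>l. pg * (real l * ?geo l)) sums (pg * (1 / \<rho> i))"
    by (intro sums_mult geometric_mean_sums r)
  have "(\<integral>\<^sup>+w. ennreal (real (hop_gen G S N t i w)) \<partial>M)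
      = (\<Sum>l. \<integral>\<^sup>+w. ennreal (real (hop_gen G S N t i w)) * indicator {w \<in> space M. hop_delay S N t i w = l} w \<partial>M)"
    by (rule nn_integral_nat_split) measurable
  also have "\<dots> = (\<Sum>l. ennreal (pg * (real l * ?geo l)))"
    by (simp add: nn_integral_hop_gen_indicator[OF i] prob_hop_delay_geometric[OF i])
  also have "\<dots> = ennreal (pg * (1 / \<rho> i))"
    using sums r pg by (subst suminf_ennreal2) (auto simp: sums_iff)
  finally show ?thesis
    using r pg by (intro has_bochner_integral_nn_integral) auto
qed

lemma has_bochner_integral_tauN: "has_bochner_integral M (\<lambda>w. real (tauN S N t w)) (\<Sum>i=1..N. 1 / \<rho> i)"
  unfolding tauN_def of_nat_sum by (intro has_bochner_integral_sum has_bochner_integral_hop_delay)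

lemma has_bochner_integral_betaN: "has_bochner_integral M (\<lambda>w. real (betaN G S N t w)) (pg * (\<Sum>i=1..N. 1 / \<rho> i))"
  unfolding betaN_def of_nat_sum sum_distrib_left by (intro has_bochner_integral_sum has_bochner_integral_hop_gen)

lemma indep_vars_hop_delay: "indep_vars (\<lambda>_. count_space UNIV) (\<lambda>i. hop_delay S N t i) {1..N}"
proof (cases "N = 0")
  case True
  then show ?thesis by (simp add: indep_vars_def indep_sets_def)
next
  case False
  have "indep_vars (\<lambda>_. count_space UNIV) (\<lambda>i. hop_delay S N t i) {1..N} \<longleftrightarrow>
    (\<forall>A\<in>(\<Pi> i\<in>{1..N}. UNIV). prob (\<Inter>j\<in>{1..N}. hop_delay S N t j -` A j \<inter> space M)
        = (\<Prod>j\<in>{1..N}. prob (hop_delay S N t j -` A j \<inter> space M)))"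
    by (rule indep_vars_finite) (use False hop_delay_rv in \<open>auto simp: Int_stable_def\<close>)
  moreover have "prob (\<Inter>j\<in>{1..N}. hop_delay S N t j -` A j \<inter> space M)
        = (\<Prod>j\<in>{1..N}. prob (hop_delay S N t j -` A j \<inter> space M))" for A
  proof -
    have "(\<Inter>j\<in>{1..N}. hop_delay S N t j -` A j \<inter> space M)
        = {w \<in> space M. \<forall>i\<in>{1..N}. hop_delay S N t i w \<in> A i}"
      using False by auto
    then have "prob (\<Inter>j\<in>{1..N}. hop_delay S N t j -` A j \<inter> space M)
        = (\<Prod>i\<in>{1..N}. prob {w \<in> space M. link_delay S i 0 w \<in> A i})"
      using prob_hop_delays_prod[of N t A] by simp
    also have "\<dots> = (\<Prod>j\<in>{1..N}. prob (hop_delay S N t j -` A j \<inter> space M))"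
      by (intro prod.cong refl) (simp add: prob_hop_delay vimage_def Int_def conj_commute)
    finally show ?thesis .
  qed
  ultimately show ?thesis by blast
qed

lemma AE_vaoi_destination_eq:
  assumes "\<And>s w. w \<in> space M \<Longrightarrow> V 0 (s + 1) w = V 0 s w + (if G s w then 1 else 0)"
    and "\<And>i s w. i \<in> {1..N} \<Longrightarrow> w \<in> space M \<Longrightarrow>
           V (Suc i) (s + 1) w = (if S i s w then V i s w else V (Suc i) s w)"
  shows "AE w in M. vaoi V (N + 1) t w = vaoi V 1 (t - int (tauN S N t w)) w + int (betaN G S N t w)"
proof -
  have "AE w in M. \<forall>i\<in>{1..N}. \<forall>c. \<exists>j\<ge>1. S i (c - int j) w"
    by (intro AE_ball_countable' AE_all_countable[THEN iffD2] allI AE_link_success) auto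
  with AE_space show ?thesis
    by eventually_elim (rule vaoi_destination_eq; use assms in auto)
qed

end

theorem lemma3:
  fixes M :: "'a measure" and G :: "int \<Rightarrow> 'a \<Rightarrow> bool" and S :: "nat \<Rightarrow> int \<Rightarrow> 'a \<Rightarrow> bool"
    and V :: "nat \<Rightarrow> int \<Rightarrow> 'a \<Rightarrow> int" and N :: nat and t :: int
    and pg :: real and \<rho> :: "nat \<Rightarrow> real"
  assumes "prob_space M"
    and pg: "0 \<le> pg" "pg \<le> 1"
    and rho: "\<And>i. i \<in> {1..N} \<Longrightarrow> 0 < \<rho> i \<and> \<rho> i \<le> 1"
    and indep: "prob_space.indep_vars M (\<lambda>_. count_space UNIV) (case_sum G (case_prod S))
                  (range Inl \<union> Inr ` ({1..N} \<times> UNIV))"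
    and gen: "\<And>s. measure M {w \<in> space M. G s w} = pg"
    and succ: "\<And>i s. i \<in> {1..N} \<Longrightarrow> measure M {w \<in> space M. S i s w} = \<rho> i"
    and source: "\<And>s w. w \<in> space M \<Longrightarrow> V 0 (s + 1) w = V 0 s w + (if G s w then 1 else 0)"
    and relay: "\<And>i s w. i \<in> {1..N} \<Longrightarrow> w \<in> space M \<Longrightarrow>
                  V (Suc i) (s + 1) w = (if S i s w then V i s w else V (Suc i) s w)"
  shows "(AE w in M. vaoi V (N + 1) t w
            = vaoi V 1 (t - int (tauN S N t w)) w + int (betaN G S N t w))
       \<and> prob_space.indep_vars M (\<lambda>_. count_space UNIV) (\<lambda>i. hop_delay S N t i) {1..N}
       \<and> (\<forall>i\<in>{1..N}. \<forall>l\<ge>1. measure M {w \<in> space M. hop_delay S N t i w = l}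
              = (1 - \<rho> i) ^ (l - 1) * \<rho> i)
       \<and> (\<forall>i\<in>{1..N}. \<forall>l k. measure M {w \<in> space M. hop_delay S N t i w = l \<and> hop_gen G S N t i w = k}
              = real (l choose k) * pg ^ k * (1 - pg) ^ (l - k)
                * measure M {w \<in> space M. hop_delay S N t i w = l})
       \<and> integrable M (\<lambda>w. real (tauN S N t w))
       \<and> prob_space.expectation M (\<lambda>w. real (tauN S N t w)) = (\<Sum>i=1..N. 1 / \<rho> i)
       \<and> integrable M (\<lambda>w. real (betaN G S N t w))
       \<and> prob_space.expectation M (\<lambda>w. real (betaN G S N t w)) = pg * (\<Sum>i=1..N. 1 / \<rho> i)"
proof -
  interpret relay_network M G S N pg \<rho>
    by (rule relay_network.intro) (use assms in \<open>auto simp: relay_network_axioms_def\<close>)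
  have "\<forall>i\<in>{1..N}. \<forall>l\<ge>1. prob {w \<in> space M. hop_delay S N t i w = l} = (1 - \<rho> i) ^ (l - 1) * \<rho> i"
    using prob_hop_delay_geometric by simp
  moreover have "integrable M (\<lambda>w. real (tauN S N t w))"
    and "expectation (\<lambda>w. real (tauN S N t w)) = (\<Sum>i=1..N. 1 / \<rho> i)"
    using has_bochner_integral_tauN[of t] by (simp_all add: has_bochner_integral_iff)
  moreover have "integrable M (\<lambda>w. real (betaN G S N t w))"
    and "expectation (\<lambda>w. real (betaN G S N t w)) = pg * (\<Sum>i=1..N. 1 / \<rho> i)"
    using has_bochner_integral_betaN[of t] by (simp_all add: has_bochner_integral_iff)
  ultimately show ?thesis
    using AE_vaoi_destination_eq[OF source relay] indep_vars_hop_delay prob_hop_delay_hop_gen by blast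
qed

end
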